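(* Consider a CMILS instance and let $(x,y)$ satisfy $x_{s,i}\in[0,1]$ for all $i\in[N]$, $s\in[r_i]$, $\sum_{s\in[r_i]}x_{s,i}=1$ for every $i\in[N]$, and $y\in[0,1]^T$. For every interval $(a,b]$ over $[T]$ let $R_{a,b}:=\sum_{i\in[N]:\ r_i\in(a,b]}\max\{1-\frac52x_{[a],i},0\}d_i$. Let $(a,b]$ be an interval with $R_{a,b}>0$, let $I=\{i\in[N]: r_i\in(a,b],\ x_{[a],i}<\frac25\}$, and let $(S_1,S_2)$ be any partition of $(a,b]$ into two parts with $C(S_1)<R_{a,b}$. If $$C(S_1)+\sum_{s\in S_2}\min\{C_s,\,d(I)-C(S_1)\}\,y_s+\sum_{i\in I}x_{[T]\setminus(S_1\cup S_2),i}\,d_i\ \ge\ d(I),$$ then either $$\sum_{s\in S_2}\min\{C_s,\,R_{a,b}-C(S_1)\}\,y_s\ \ge\ R_{a,b}-C(S_1)\quad\text{or}\quad\sum_{s\in S_2:\ C_s\ge R_{a,b}-C(S_1)}y_s\ \ge\ \tfrac35.$$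
   Context: CMILS instance: periods $[T]$, items $[N]$; item $i$ has demand $d_i>0$ due by time $r_i\in[T]$; period $s$ has capacity $C_s>0$ (and ordering cost $K_s>0$); holding costs are irrelevant here. Notation: $x_{s,i}=0$ for $s>r_i$; $x_{S,i}=\sum_{s\in S}x_{s,i}$ for $S\subseteq[T]$; $[a]=\{1,\dots,a\}$ ($[0]=\emptyset$); $(a,b]=\{a+1,\dots,b\}$ and an interval over $[T]$ is $(a,b]$ with integers $0\le a<b\le T$; $C(S)=\sum_{s\in S}C_s$; $d(I)=\sum_{i\in I}d_i$. *)

theory Defs
  imports Complex_Main
begin

text \<open>CMILS instance data: periods 1..T, items 1..N; demand d i > 0 due by r i \<in> {1..T};
  capacity C s > 0 and ordering cost K s > 0 for s \<in> {1..T}.\<close>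
definition cmils_instance ::
  "nat \<Rightarrow> nat \<Rightarrow> (nat \<Rightarrow> real) \<Rightarrow> (nat \<Rightarrow> nat) \<Rightarrow> (nat \<Rightarrow> real) \<Rightarrow> (nat \<Rightarrow> real) \<Rightarrow> bool" where
  "cmils_instance T N d r C K \<longleftrightarrow>
     (\<forall>i\<in>{1..N}. d i > 0 \<and> r i \<in> {1..T}) \<and> (\<forall>s\<in>{1..T}. C s > 0 \<and> K s > 0)"

definition xS :: "(nat \<Rightarrow> nat \<Rightarrow> real) \<Rightarrow> nat set \<Rightarrow> nat \<Rightarrow> real" where
  "xS x S i = (\<Sum>s\<in>S. x s i)"

definition capS :: "(nat \<Rightarrow> real) \<Rightarrow> nat set \<Rightarrow> real" where
  "capS C S = (\<Sum>s\<in>S. C s)"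

definition dem :: "(nat \<Rightarrow> real) \<Rightarrow> nat set \<Rightarrow> real" where
  "dem d I = (\<Sum>i\<in>I. d i)"

definition Rab :: "nat \<Rightarrow> (nat \<Rightarrow> nat) \<Rightarrow> (nat \<Rightarrow> real) \<Rightarrow> (nat \<Rightarrow> nat \<Rightarrow> real) \<Rightarrow> nat \<Rightarrow> nat \<Rightarrow> real" where
  "Rab N r d x a b =
     (\<Sum>i\<in>{i\<in>{1..N}. r i \<in> {a<..b}}. max (1 - 5/2 * xS x {1..a} i) 0 * d i)"

end

theory Submission
  imports Defs
begin

text \<open>Put X = \<Sum>i\<in>I. x[a],i d_i. Only items of I contribute to R_{a,b}, so R_{a,b} = d(I) - 5/2 X;
  items of I are due in (a,b], so outside S1 \<union> S2 they are served only in [a], and the hypothesis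
  reads \<Sum> min{C_s, E} y_s \<ge> E - X with E = d(I) - C(S1). Lowering the cap from E to
  \<Delta> = R_{a,b} - C(S1) = E - 5/2 X affects only the periods with C_s \<ge> \<Delta>, each losing at most
  (E - \<Delta>) y_s; unless these periods carry weight 3/5, the total loss is below 3/2 X and the
  cover of \<Delta> survives.\<close>

lemma capped_cover_lower_or_heavy:
  fixes C y :: "'a \<Rightarrow> real" and E \<Delta> \<theta> :: real
  assumes "finite S" and y_nonneg: "\<forall>s\<in>S. 0 \<le> y s" and "\<Delta> \<le> E"
    and cover: "(\<Sum>s\<in>S. min (C s) E * y s) \<ge> E - \<theta> * (E - \<Delta>)"
  shows "(\<Sum>s\<in>S. min (C s) \<Delta> * y s) \<ge> \<Delta> \<or> (\<Sum>s\<in>{s\<in>S. C s \<ge> \<Delta>}. y s) \<ge> 1 - \<theta>"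
proof (rule disjCI)
  define Y where "Y = (\<Sum>s\<in>{s\<in>S. C s \<ge> \<Delta>}. y s)"
  assume "\<not> Y \<ge> 1 - \<theta>"
  have "(\<Sum>s\<in>S. min (C s) E * y s)
        \<le> (\<Sum>s\<in>S. min (C s) \<Delta> * y s + (E - \<Delta>) * (if C s \<ge> \<Delta> then y s else 0))"
    using y_nonneg \<open>\<Delta> \<le> E\<close> by (intro sum_mono) (auto simp: min_def mult_right_mono algebra_simps)
  also have "\<dots> = (\<Sum>s\<in>S. min (C s) \<Delta> * y s) + (E - \<Delta>) * Y"
    by (simp add: Y_def sum.distrib sum_distrib_left sum.inter_filter[OF \<open>finite S\<close>])
  finally have "(\<Sum>s\<in>S. min (C s) \<Delta> * y s) \<ge> \<Delta> + (E - \<Delta>) * (1 - \<theta> - Y)"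
    using cover by (simp add: algebra_simps)
  moreover have "(E - \<Delta>) * (1 - \<theta> - Y) \<ge> 0"
    using \<open>\<Delta> \<le> E\<close> \<open>\<not> Y \<ge> 1 - \<theta>\<close> by simp
  ultimately show "(\<Sum>s\<in>S. min (C s) \<Delta> * y s) \<ge> \<Delta>" by linarith
qed

lemma Rab_eq_sum_low_items:
  "Rab N r d x a b =
     (\<Sum>i\<in>{i\<in>{1..N}. r i \<in> {a<..b} \<and> xS x {1..a} i < 2/5}. (1 - 5/2 * xS x {1..a} i) * d i)"
proof -
  have "Rab N r d x a b =
     (\<Sum>i\<in>{i\<in>{1..N}. r i \<in> {a<..b}}.
        if xS x {1..a} i < 2/5 then (1 - 5/2 * xS x {1..a} i) * d i else 0)"
    unfolding Rab_def by (intro sum.cong) auto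
  also have "\<dots> = (\<Sum>i\<in>{i\<in>{1..N}. r i \<in> {a<..b} \<and> xS x {1..a} i < 2/5}.
                    (1 - 5/2 * xS x {1..a} i) * d i)"
    by (subst sum.inter_filter[symmetric]) (simp_all add: conj_assoc)
  finally show ?thesis .
qed

lemma xS_outside_interval:
  assumes "a < b" "b \<le> T" "r i \<le> b" and zero: "\<forall>s. r i < s \<longrightarrow> x s i = 0"
  shows "xS x ({1..T} - {a<..b}) i = xS x {1..a} i"
proof -
  have "{1..T} - {a<..b} = {1..a} \<union> {b<..T}" using assms(1,2) by auto
  moreover have "xS x {b<..T} i = 0"
    unfolding xS_def using \<open>r i \<le> b\<close> zero by simp
  moreover have "xS x ({1..a} \<union> {b<..T}) i = xS x {1..a} i + xS x {b<..T} i"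
    unfolding xS_def using \<open>a < b\<close> by (intro sum.union_disjoint) auto
  ultimately show ?thesis by simp
qed

theorem lemma2:
  fixes T N :: nat and d :: "nat \<Rightarrow> real" and r :: "nat \<Rightarrow> nat"
    and C K :: "nat \<Rightarrow> real" and x :: "nat \<Rightarrow> nat \<Rightarrow> real" and y :: "nat \<Rightarrow> real"
    and a b :: nat and I S1 S2 :: "nat set"
  assumes inst: "cmils_instance T N d r C K"
    and x01: "\<forall>i\<in>{1..N}. \<forall>s\<in>{1..r i}. 0 \<le> x s i \<and> x s i \<le> 1"
    and xzero: "\<forall>i\<in>{1..N}. \<forall>s. r i < s \<longrightarrow> x s i = 0"
    and xsum1: "\<forall>i\<in>{1..N}. xS x {1..r i} i = 1"
    and y01: "\<forall>s\<in>{1..T}. 0 \<le> y s \<and> y s \<le> 1"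
    and ab: "a < b" "b \<le> T"
    and Rpos: "Rab N r d x a b > 0"
    and I_def: "I = {i\<in>{1..N}. r i \<in> {a<..b} \<and> xS x {1..a} i < 2/5}"
    and part: "S1 \<union> S2 = {a<..b}" "S1 \<inter> S2 = {}"
    and cS1: "capS C S1 < Rab N r d x a b"
    and hyp: "capS C S1 + (\<Sum>s\<in>S2. min (C s) (dem d I - capS C S1) * y s)
                + (\<Sum>i\<in>I. xS x ({1..T} - (S1 \<union> S2)) i * d i) \<ge> dem d I"
  shows "(\<Sum>s\<in>S2. min (C s) (Rab N r d x a b - capS C S1) * y s) \<ge> Rab N r d x a b - capS C S1
         \<or> (\<Sum>s\<in>{s\<in>S2. C s \<ge> Rab N r d x a b - capS C S1}. y s) \<ge> 3/5"
proof -
  define X where "X = (\<Sum>i\<in>I. xS x {1..a} i * d i)"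
  define E where "E = dem d I - capS C S1"
  define \<Delta> where "\<Delta> = Rab N r d x a b - capS C S1"
  have "Rab N r d x a b = dem d I - 5/2 * X"
    unfolding Rab_eq_sum_low_items I_def[symmetric] X_def dem_def
    by (simp add: algebra_simps sum_subtractf sum_distrib_left)
  then have X_eq: "X = 2/5 * (E - \<Delta>)" unfolding E_def \<Delta>_def by simp
  have "X \<ge> 0"
    unfolding X_def xS_def using inst x01
    by (intro sum_nonneg mult_nonneg_nonneg) (auto simp: I_def cmils_instance_def less_imp_le)
  have "(\<Sum>i\<in>I. xS x ({1..T} - (S1 \<union> S2)) i * d i) = X"
    unfolding X_def part(1)
  proof (intro sum.cong refl)
    fix i assume "i \<in> I"
    then show "xS x ({1..T} - {a<..b}) i * d i = xS x {1..a} i * d i"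
      using xS_outside_interval[OF ab, of r i x] xzero by (simp add: I_def)
  qed
  with hyp X_eq have "(\<Sum>s\<in>S2. min (C s) E * y s) \<ge> E - 2/5 * (E - \<Delta>)"
    unfolding E_def by linarith
  moreover have "S2 \<subseteq> {1..T}" using part(1) ab by (auto dest!: equalityD1)
  then have "\<forall>s\<in>S2. 0 \<le> y s" using y01 by blast
  moreover have "finite S2" using part(1) by (metis finite_Un finite_greaterThanAtMost)
  moreover have "\<Delta> \<le> E" using X_eq \<open>X \<ge> 0\<close> by simp
  ultimately have "(\<Sum>s\<in>S2. min (C s) \<Delta> * y s) \<ge> \<Delta> \<or> (\<Sum>s\<in>{s\<in>S2. C s \<ge> \<Delta>}. y s) \<ge> 1 - 2/5"
    by (intro capped_cover_lower_or_heavy)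
  then show ?thesis unfolding \<Delta>_def by simp
qed

end
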